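(* For every $T>0$, $$\sup_{t\in[0,T]}\Bigl|\int_0^t Y^N(s)\,\widetilde Z^N(s)\,ds\Bigr|\to0$$ in probability as $N\to\infty$.
   Context: Model. Fix $\tau>0$, $\mu\ge 0$, $N\in\mathbb N$, and write $L=\lfloor \tau N\rfloor$. The state space is $\Omega_N=[0,\infty)^{L+1}$, with elements $x=(x_{-L},\dots,x_0)$. Define $\theta_N^\pm:\Omega_N\to\Omega_N$ by $(\theta_N^\pm x)_j=x_{j+1}$ for $-L\le j<0$, $(\theta_N^+x)_0=x_0(1+\frac1N)$, $(\theta_N^-x)_0=\max\{x_0(1-\frac{x_{-L}}{N^2}),0\}$. Let $\xi^N=(\xi^N(n))_{n\ge0}$ be the discrete-time Markov chain on $\Omega_N$ moving from $x$ to $\theta_N^+x$ or $\theta_N^-x$ with probability $1/2$ each, with $\xi^N_j(0)=\mu N$ for all $j$. Let $(\sigma_n)_{n\ge1}$ be i.i.d. Exp(1), independent of $\xi^N$, $J_0=0$, $J_n=\sigma_1+\dots+\sigma_n$, and $X^N(t)=\xi^N(n)$ for $t\in[J_n,J_{n+1})$. For $t\ge0$: $Y^N(t)=X^N_0(Nt)/N$, $Z^N(t)=X^N_{-L}(Nt)/N$, $\widetilde Z^N(t)=Z^N(t)-\min\{Z^N(t),N\}$. *)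

theory Defs
  imports "HOL-Probability.Probability"
begin

text \<open>States x = (x_{-L},...,x_0) are represented as functions int => real,
  meaningful on indices -L..0 (other indices are kept at 0).\<close>

definition Lag :: "real \<Rightarrow> nat \<Rightarrow> nat" where
  "Lag \<tau> N = nat \<lfloor>\<tau> * real N\<rfloor>"

definition theta_plus :: "real \<Rightarrow> nat \<Rightarrow> (int \<Rightarrow> real) \<Rightarrow> (int \<Rightarrow> real)" where
  "theta_plus \<tau> N x = (\<lambda>j. if - int (Lag \<tau> N) \<le> j \<and> j < 0 then x (j + 1)
      else if j = 0 then x 0 * (1 + 1 / real N) else 0)"

definition theta_minus :: "real \<Rightarrow> nat \<Rightarrow> (int \<Rightarrow> real) \<Rightarrow> (int \<Rightarrow> real)" where
  "theta_minus \<tau> N x = (\<lambda>j. if - int (Lag \<tau> N) \<le> j \<and> j < 0 then x (j + 1)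
      else if j = 0 then max (x 0 * (1 - x (- int (Lag \<tau> N)) / (real N)^2)) 0 else 0)"

text \<open>Canonical probability space: coin flips (b n) deciding the n-th step of the chain,
  and i.i.d. Exp(1) holding times (s k) = sigma_{k+1}, all independent.\<close>

definition model_space :: "((nat \<Rightarrow> bool) \<times> (nat \<Rightarrow> real)) measure" where
  "model_space =
     (\<Pi>\<^sub>M n\<in>UNIV. measure_pmf (bernoulli_pmf (1/2))) \<Otimes>\<^sub>M
     (\<Pi>\<^sub>M k\<in>UNIV. density lborel (exponential_density 1))"

primrec xi :: "real \<Rightarrow> real \<Rightarrow> nat \<Rightarrow> (nat \<Rightarrow> bool) \<times> (nat \<Rightarrow> real) \<Rightarrow> nat \<Rightarrow> (int \<Rightarrow> real)" where
  "xi \<tau> \<mu> N \<omega> 0 = (\<lambda>j. if - int (Lag \<tau> N) \<le> j \<and> j \<le> 0 then \<mu> * real N else 0)"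
| "xi \<tau> \<mu> N \<omega> (Suc n) =
     (if fst \<omega> n then theta_plus \<tau> N (xi \<tau> \<mu> N \<omega> n) else theta_minus \<tau> N (xi \<tau> \<mu> N \<omega> n))"

definition jump_time :: "(nat \<Rightarrow> bool) \<times> (nat \<Rightarrow> real) \<Rightarrow> nat \<Rightarrow> real" where
  "jump_time \<omega> n = (\<Sum>k<n. snd \<omega> k)"

definition Xc :: "real \<Rightarrow> real \<Rightarrow> nat \<Rightarrow> (nat \<Rightarrow> bool) \<times> (nat \<Rightarrow> real) \<Rightarrow> real \<Rightarrow> (int \<Rightarrow> real)" where
  "Xc \<tau> \<mu> N \<omega> t =
     xi \<tau> \<mu> N \<omega> (THE n. jump_time \<omega> n \<le> t \<and> t < jump_time \<omega> (Suc n))"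

definition Yp :: "real \<Rightarrow> real \<Rightarrow> nat \<Rightarrow> (nat \<Rightarrow> bool) \<times> (nat \<Rightarrow> real) \<Rightarrow> real \<Rightarrow> real" where
  "Yp \<tau> \<mu> N \<omega> t = Xc \<tau> \<mu> N \<omega> (real N * t) 0 / real N"

definition Zp :: "real \<Rightarrow> real \<Rightarrow> nat \<Rightarrow> (nat \<Rightarrow> bool) \<times> (nat \<Rightarrow> real) \<Rightarrow> real \<Rightarrow> real" where
  "Zp \<tau> \<mu> N \<omega> t = Xc \<tau> \<mu> N \<omega> (real N * t) (- int (Lag \<tau> N)) / real N"

definition Ztilde :: "real \<Rightarrow> real \<Rightarrow> nat \<Rightarrow> (nat \<Rightarrow> bool) \<times> (nat \<Rightarrow> real) \<Rightarrow> real \<Rightarrow> real" where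
  "Ztilde \<tau> \<mu> N \<omega> t = Zp \<tau> \<mu> N \<omega> t - min (Zp \<tau> \<mu> N \<omega> t) (real N)"

end

theory Submission
  imports Defs
begin

(* A step shifts the history and multiplies x_0 by a factor between 0 and 1 + 1/N, so during the
   first k N jumps every coordinate stays below mu N (1 + 1/N)^(k N) <= mu N e^k, which is at most
   N^2 for large N. Then Z <= N and Ztilde vanishes, whatever the lag is.
   The first k N holding times sum to more than N T except with probability at most
   e^(N T) 2^(-k N) (Chernoff bound for Exp(1) variables); choosing 2^k > e^T makes this decay
   geometrically in N. So with probability tending to 1 the integral vanishes on all of [0, T]. *)

lemma theta_plus_bounds:
  assumes "\<And>i. 0 \<le> x i \<and> x i \<le> c"
  shows "0 \<le> theta_plus \<tau> N x j \<and> theta_plus \<tau> N x j \<le> c * (1 + 1 / real N)"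
proof -
  have "c \<le> c * (1 + 1 / real N)"
    using assms[of 0] by (simp add: algebra_simps)
  moreover have "x 0 * (1 + 1 / real N) \<le> c * (1 + 1 / real N)"
    using assms[of 0] by (intro mult_right_mono) auto
  ultimately show ?thesis
    using assms[of 0] assms[of "j + 1"] by (auto simp: theta_plus_def)
qed

lemma theta_minus_bounds:
  assumes "\<And>i. 0 \<le> x i \<and> x i \<le> c"
  shows "0 \<le> theta_minus \<tau> N x j \<and> theta_minus \<tau> N x j \<le> c"
proof -
  have "x 0 * (1 - x (- int (Lag \<tau> N)) / (real N)^2) \<le> x 0"
    using assms[of 0] assms[of "- int (Lag \<tau> N)"] by (simp add: algebra_simps)
  then show ?thesis
    using assms[of 0] assms[of "j + 1"] by (auto simp: theta_minus_def)
qed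

lemma xi_bounds:
  assumes "\<mu> \<ge> 0"
  shows "0 \<le> xi \<tau> \<mu> N \<omega> n j \<and> xi \<tau> \<mu> N \<omega> n j \<le> \<mu> * real N * (1 + 1 / real N) ^ n"
proof (induction n arbitrary: j)
  case 0
  then show ?case using assms by auto
next
  case (Suc n)
  let ?x = "xi \<tau> \<mu> N \<omega> n" and ?c = "\<mu> * real N * (1 + 1 / real N) ^ n"
  have "?c \<le> ?c * (1 + 1 / real N)"
    using assms by (simp add: algebra_simps)
  then show ?case
    using theta_plus_bounds[of ?x ?c \<tau> N j] theta_minus_bounds[of ?x ?c \<tau> N j] Suc.IH
    by (auto simp: mult_ac)
qed

lemma jump_time_mono:
  assumes "\<And>k. 0 \<le> snd \<omega> k"
  shows "mono (jump_time \<omega>)"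
  by (rule incseq_SucI) (simp add: jump_time_def assms)

lemma jump_interval_unique:
  assumes "\<And>k. 0 \<le> snd \<omega> k"
    and "jump_time \<omega> n \<le> t \<and> t < jump_time \<omega> (Suc n)"
    and "jump_time \<omega> n' \<le> t \<and> t < jump_time \<omega> (Suc n')"
  shows "n' = n"
proof (rule ccontr)
  have mono: "jump_time \<omega> a \<le> jump_time \<omega> b" if "a \<le> b" for a b
    using jump_time_mono[OF assms(1)] that by (rule monoD)
  assume "n' \<noteq> n"
  then consider "Suc n' \<le> n" | "Suc n \<le> n'" by linarith
  then show False
  proof cases
    case 1
    then show False using mono[OF 1] assms(2,3) by linarith
  next
    case 2
    then show False using mono[OF 2] assms(2,3) by linarith
  qed
qed

lemma jump_interval_exists:
  assumes "0 \<le> t" and "t < jump_time \<omega> m"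
  shows "\<exists>n<m. jump_time \<omega> n \<le> t \<and> t < jump_time \<omega> (Suc n)"
  using assms(2)
proof (induction m)
  case 0
  then show ?case using assms(1) by (simp add: jump_time_def)
next
  case (Suc m)
  then show ?case
    by (cases "t < jump_time \<omega> m") (auto simp: not_less intro: less_SucI)
qed

lemma Xc_before_jump_time:
  assumes "\<And>k. 0 \<le> snd \<omega> k" and "0 \<le> t" and "t < jump_time \<omega> m"
  shows "\<exists>n<m. Xc \<tau> \<mu> N \<omega> t = xi \<tau> \<mu> N \<omega> n"
proof -
  obtain n where "n < m" and n: "jump_time \<omega> n \<le> t \<and> t < jump_time \<omega> (Suc n)"
    using jump_interval_exists[OF assms(2,3)] by blast
  have "(THE n. jump_time \<omega> n \<le> t \<and> t < jump_time \<omega> (Suc n)) = n"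
    by (rule the_equality) (fact n, rule jump_interval_unique[OF assms(1) n])
  with \<open>n < m\<close> show ?thesis
    unfolding Xc_def by metis
qed

lemma Ztilde_eq_0_before_jump_time:
  assumes "\<mu> \<ge> 0" and "\<And>k. 0 \<le> snd \<omega> k" and "0 \<le> s"
    and "real N * s < jump_time \<omega> m" and "\<mu> * (1 + 1 / real N) ^ m \<le> real N"
  shows "Ztilde \<tau> \<mu> N \<omega> s = 0"
proof -
  have "0 \<le> real N * s"
    using assms(3) by simp
  then obtain n where "n < m" and "Xc \<tau> \<mu> N \<omega> (real N * s) = xi \<tau> \<mu> N \<omega> n"
    using Xc_before_jump_time[OF assms(2) _ assms(4), of \<tau> \<mu> N] by blast
  then have "Zp \<tau> \<mu> N \<omega> s = xi \<tau> \<mu> N \<omega> n (- int (Lag \<tau> N)) / real N"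
    by (simp add: Zp_def)
  also have "\<dots> \<le> \<mu> * (1 + 1 / real N) ^ n"
    using xi_bounds[OF assms(1), of \<tau> N \<omega> n "- int (Lag \<tau> N)"] assms(1)
    by (cases "N = 0") (auto simp: field_simps)
  also have "\<dots> \<le> \<mu> * (1 + 1 / real N) ^ m"
    using \<open>n < m\<close> assms(1) by (intro mult_left_mono power_increasing) auto
  finally show ?thesis
    using assms(5) by (simp add: Ztilde_def)
qed

lemma SUP_integral_Yp_Ztilde_eq_0:
  assumes "\<mu> \<ge> 0" and "\<And>k. 0 \<le> snd \<omega> k" and "0 \<le> T"
    and "real N * T < jump_time \<omega> m" and "\<mu> * (1 + 1 / real N) ^ m \<le> real N"
  shows "(SUP t\<in>{0..T}. \<bar>integral {0..t} (\<lambda>s. Yp \<tau> \<mu> N \<omega> s * Ztilde \<tau> \<mu> N \<omega> s)\<bar>) = 0"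
proof -
  have "integral {0..t} (\<lambda>s. Yp \<tau> \<mu> N \<omega> s * Ztilde \<tau> \<mu> N \<omega> s) = 0" if "t \<in> {0..T}" for t
  proof -
    have "Ztilde \<tau> \<mu> N \<omega> s = 0" if "s \<in> {0..t}" for s
    proof (rule Ztilde_eq_0_before_jump_time[OF assms(1,2) _ _ assms(5)])
      have "real N * s \<le> real N * T"
        using \<open>s \<in> {0..t}\<close> \<open>t \<in> {0..T}\<close> by (intro mult_left_mono) auto
      then show "real N * s < jump_time \<omega> m"
        using assms(4) by linarith
    qed (use that in auto)
    then have "integral {0..t} (\<lambda>s. Yp \<tau> \<mu> N \<omega> s * Ztilde \<tau> \<mu> N \<omega> s)
        = integral {0..t} (\<lambda>_. 0)"
      by (intro integral_cong) simp
    then show ?thesis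
      by simp
  qed
  then show ?thesis
    using assms(3) by simp
qed

lemma nn_integral_exp_neg_exponential:
  assumes "0 < l"
  shows "(\<integral>\<^sup>+x. ennreal (exp (- x)) \<partial>density lborel (exponential_density l)) = ennreal (l / (l + 1))"
proof -
  have "(\<integral>\<^sup>+x. ennreal (exp (- x)) \<partial>density lborel (exponential_density l))
      = (\<integral>\<^sup>+x. ennreal (exponential_density (l + 1) x) * ennreal (l / (l + 1)) \<partial>lborel)"
  proof (subst nn_integral_density; (intro nn_integral_cong)?)
    fix x :: real
    have "exponential_density l x * exp (- x) = exponential_density (l + 1) x * (l / (l + 1))"
      using assms by (auto simp: exponential_density_def exp_add[symmetric] field_simps)
    then show "ennreal (exponential_density l x) * ennreal (exp (- x))
        = ennreal (exponential_density (l + 1) x) * ennreal (l / (l + 1))"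
      using assms by (simp add: ennreal_mult'[symmetric] exponential_density_nonneg)
  qed (use assms in \<open>auto simp: exponential_density_nonneg\<close>)
  also have "\<dots> = emeasure (density lborel (exponential_density (l + 1))) UNIV * ennreal (l / (l + 1))"
    by (simp add: nn_integral_multc emeasure_density)
  also have "\<dots> = ennreal (l / (l + 1))"
    using assms prob_space.emeasure_space_1[OF prob_space_exponential_density[of "l + 1"]] by simp
  finally show ?thesis .
qed

lemma product_prob_space_exponential:
  assumes "0 < l"
  shows "product_prob_space (\<lambda>_ :: 'i. density lborel (exponential_density l))"
  using assms
  by (simp add: product_prob_space_def product_prob_space_axioms_def product_sigma_finite_def
      prob_space_exponential_density prob_space_imp_sigma_finite)

lemma emeasure_PiM_exponential_sum_le:
  fixes l a :: real
  defines "S \<equiv> \<Pi>\<^sub>M k\<in>(UNIV :: nat set). density lborel (exponential_density l)"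
  assumes "0 < l"
  shows "emeasure S {\<sigma>\<in>space S. (\<Sum>k<m. \<sigma> k) \<le> a} \<le> ennreal (exp a * (l / (l + 1)) ^ m)"
proof -
  let ?E = "\<lambda>_ :: nat. density lborel (exponential_density l)"
  interpret product_prob_space ?E UNIV
    using assms(2) by (rule product_prob_space_exponential)
  let ?f = "\<lambda>\<sigma>. \<Prod>k<m. ennreal (exp (- \<sigma> k))"
  \<comment> \<open>Markov's inequality for \<open>exp (a - \<Sum>k<m. \<sigma> k)\<close>\<close>
  have "emeasure S {\<sigma>\<in>space S. (\<Sum>k<m. \<sigma> k) \<le> a} \<le> (\<integral>\<^sup>+\<sigma>. ennreal (exp a) * ?f \<sigma> \<partial>S)"
  proof (subst nn_integral_indicator[symmetric], unfold S_def, measurable, rule nn_integral_mono)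
    fix \<sigma> :: "nat \<Rightarrow> real"
    have "exp (a - (\<Sum>k<m. \<sigma> k)) = exp a * (\<Prod>k<m. exp (- \<sigma> k))"
      unfolding exp_sum[OF finite_lessThan, symmetric] exp_add[symmetric] by (simp add: sum_negf)
    then have "ennreal (exp a) * ?f \<sigma> = ennreal (exp (a - (\<Sum>k<m. \<sigma> k)))"
      by (simp add: prod_ennreal ennreal_mult prod_nonneg)
    then show "indicator {\<sigma>\<in>space (PiM UNIV ?E). (\<Sum>k<m. \<sigma> k) \<le> a} \<sigma> \<le> ennreal (exp a) * ?f \<sigma>"
      by (auto simp: indicator_def)
  qed
  also have "\<dots> = ennreal (exp a) * (\<integral>\<^sup>+\<sigma>. ?f \<sigma> \<partial>S)"
    unfolding S_def by (subst nn_integral_cmult) simp_all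
  also have "(\<integral>\<^sup>+\<sigma>. ?f \<sigma> \<partial>S) = (\<integral>\<^sup>+\<sigma>. ?f (restrict \<sigma> {..<m}) \<partial>S)"
    by (rule nn_integral_cong) simp
  also have "\<dots> = (\<integral>\<^sup>+\<sigma>. ?f \<sigma> \<partial>distr S (PiM {..<m} ?E) (\<lambda>\<sigma>. restrict \<sigma> {..<m}))"
    unfolding S_def by (rule nn_integral_distr[symmetric]) measurable
  also have "distr S (PiM {..<m} ?E) (\<lambda>\<sigma>. restrict \<sigma> {..<m}) = PiM {..<m} ?E"
    unfolding S_def by (rule distr_PiM_restrict_finite) auto
  also have "(\<integral>\<^sup>+\<sigma>. ?f \<sigma> \<partial>PiM {..<m} ?E) = (\<Prod>k<m. \<integral>\<^sup>+x. ennreal (exp (- x)) \<partial>?E k)"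
    by (rule product_nn_integral_prod) auto
  also have "\<dots> = ennreal ((l / (l + 1)) ^ m)"
    using assms(2) by (simp add: nn_integral_exp_neg_exponential ennreal_power)
  finally show ?thesis
    by (simp add: ennreal_mult')
qed

lemma AE_PiM_exponential_nonneg:
  assumes "0 < l"
  shows "AE \<sigma> in \<Pi>\<^sub>M k\<in>(UNIV :: nat set). density lborel (exponential_density l). \<forall>k. 0 \<le> \<sigma> k"
proof -
  interpret E: product_prob_space "\<lambda>_ :: nat. density lborel (exponential_density l)" UNIV
    using assms by (rule product_prob_space_exponential)
  have "AE x in density lborel (exponential_density l). 0 \<le> x"
    by (subst AE_density) (auto simp: exponential_density_def)
  then have "AE \<sigma> in PiM UNIV (\<lambda>_. density lborel (exponential_density l)). 0 \<le> \<sigma> k" for k :: nat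
    by (intro E.AE_component) auto
  then show ?thesis
    by (simp add: AE_all_countable)
qed

lemma measure_pair_measure_snd_preimage:
  assumes "prob_space M" and "sigma_finite_measure N" and "A \<in> sets N"
  shows "measure (M \<Otimes>\<^sub>M N) {\<omega>\<in>space (M \<Otimes>\<^sub>M N). snd \<omega> \<in> A} = measure N A"
proof -
  have "{\<omega>\<in>space (M \<Otimes>\<^sub>M N). snd \<omega> \<in> A} = space M \<times> A"
    using sets.sets_into_space[OF assms(3)] by (auto simp: space_pair_measure)
  moreover have "emeasure (M \<Otimes>\<^sub>M N) (space M \<times> A) = emeasure N A"
    using sigma_finite_measure.emeasure_pair_measure_Times[OF assms(2) sets.top[of M] assms(3)]
      prob_space.emeasure_space_1[OF assms(1)] by simp
  ultimately show ?thesis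
    by (simp add: measure_def)
qed

lemma measure_jump_time_le:
  "measure model_space {\<omega>\<in>space model_space. jump_time \<omega> m \<le> a \<or> (\<exists>k. snd \<omega> k < 0)}
     \<le> exp a / 2 ^ m"
proof -
  let ?S = "\<Pi>\<^sub>M k\<in>(UNIV :: nat set). density lborel (exponential_density 1)"
  interpret S: product_prob_space "\<lambda>_ :: nat. density lborel (exponential_density 1)" UNIV
    by (rule product_prob_space_exponential) simp
  define B where "B = {\<sigma>\<in>space ?S. (\<Sum>k<m. \<sigma> k) \<le> a \<or> (\<exists>k. \<sigma> k < 0)}"
  have B: "B \<in> sets ?S"
    unfolding B_def by measurable
  have "{\<omega>\<in>space model_space. jump_time \<omega> m \<le> a \<or> (\<exists>k. snd \<omega> k < 0)}
      = {\<omega>\<in>space model_space. snd \<omega> \<in> B}"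
    by (auto simp: B_def model_space_def space_pair_measure jump_time_def)
  also have "measure model_space \<dots> = measure ?S B"
    unfolding model_space_def using B
    by (intro measure_pair_measure_snd_preimage prob_space_PiM)
      (simp_all add: prob_space_measure_pmf S.P.sigma_finite_measure)
  also have "\<dots> \<le> exp a * (1 / (1 + 1)) ^ m"
  proof -
    have "AE \<sigma> in ?S. \<sigma> \<in> B \<longrightarrow> \<sigma> \<in> {\<sigma>\<in>space ?S. (\<Sum>k<m. \<sigma> k) \<le> a}"
      using AE_PiM_exponential_nonneg[OF zero_less_one]
      by eventually_elim (auto simp: B_def simp flip: not_le)
    then have "emeasure ?S B \<le> emeasure ?S {\<sigma>\<in>space ?S. (\<Sum>k<m. \<sigma> k) \<le> a}"
      by (rule emeasure_mono_AE) measurable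
    also have "\<dots> \<le> ennreal (exp a * (1 / (1 + 1)) ^ m)"
      by (rule emeasure_PiM_exponential_sum_le) simp
    finally show ?thesis
      by (simp add: S.emeasure_eq_measure)
  qed
  finally show ?thesis
    by (simp add: power_divide)
qed

lemma one_plus_inverse_power_le_exp: "(1 + 1 / real N) ^ (k * N) \<le> exp (real k)"
proof (cases "N = 0")
  case False
  have "(1 + 1 / real N) ^ (k * N) \<le> exp (1 / real N) ^ (k * N)"
    using exp_ge_add_one_self[of "1 / real N"] by (intro power_mono) (auto simp: add.commute)
  also have "\<dots> = exp (real k)"
    using False by (simp add: exp_of_nat_mult[symmetric])
  finally show ?thesis .
qed simp

lemma prob_space_model_space: "prob_space model_space"
  unfolding model_space_def
  by (intro prob_space_pair prob_space_PiM)
    (simp_all add: prob_space_measure_pmf prob_space_exponential_density)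

lemma measure_SUP_integral_Yp_Ztilde_gt_le:
  assumes "\<mu> \<ge> 0" and "T \<ge> 0" and "\<epsilon> > 0" and "\<mu> * exp (real k) \<le> real N"
  shows "measure model_space {\<omega> \<in> space model_space.
           (SUP t\<in>{0..T}. \<bar>integral {0..t} (\<lambda>s. Yp \<tau> \<mu> N \<omega> s * Ztilde \<tau> \<mu> N \<omega> s)\<bar>) > \<epsilon>}
         \<le> exp (real N * T) / 2 ^ (k * N)"
    (is "measure model_space ?A \<le> _")
proof -
  interpret prob_space model_space
    by (rule prob_space_model_space)
  let ?bad = "{\<omega>\<in>space model_space. jump_time \<omega> (k * N) \<le> real N * T \<or> (\<exists>i. snd \<omega> i < 0)}"
  have growth: "\<mu> * (1 + 1 / real N) ^ (k * N) \<le> real N"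
    using mult_left_mono[OF one_plus_inverse_power_le_exp[of N k] assms(1)] assms(4) by linarith
  have "?A \<subseteq> ?bad"
  proof
    fix \<omega> assume \<omega>: "\<omega> \<in> ?A"
    show "\<omega> \<in> ?bad"
    proof (rule ccontr)
      assume "\<omega> \<notin> ?bad"
      then have "(SUP t\<in>{0..T}. \<bar>integral {0..t} (\<lambda>s. Yp \<tau> \<mu> N \<omega> s * Ztilde \<tau> \<mu> N \<omega> s)\<bar>) = 0"
        using \<omega> by (intro SUP_integral_Yp_Ztilde_eq_0[OF assms(1) _ assms(2) _ growth])
          (auto simp: not_le not_less)
      with \<omega> \<open>\<epsilon> > 0\<close> show False
        by simp
    qed
  qed
  then have "measure model_space ?A \<le> measure model_space ?bad"
    by (intro finite_measure_mono) (unfold model_space_def jump_time_def, measurable)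
  also have "\<dots> \<le> exp (real N * T) / 2 ^ (k * N)"
    by (rule measure_jump_time_le)
  finally show ?thesis .
qed

theorem proposition3p7:
  fixes \<tau> \<mu> T :: real
  assumes "\<tau> > 0" and "\<mu> \<ge> 0" and "T > 0"
  shows "\<forall>\<epsilon>>0. (\<lambda>N. measure model_space
           {\<omega> \<in> space model_space.
              (SUP t\<in>{0..T}. \<bar>integral {0..t} (\<lambda>s. Yp \<tau> \<mu> N \<omega> s * Ztilde \<tau> \<mu> N \<omega> s)\<bar>) > \<epsilon>})
         \<longlonglongrightarrow> 0"
proof (intro allI impI)
  fix \<epsilon> :: real
  assume "\<epsilon> > 0"
  let ?p = "\<lambda>N. measure model_space {\<omega> \<in> space model_space.
    (SUP t\<in>{0..T}. \<bar>integral {0..t} (\<lambda>s. Yp \<tau> \<mu> N \<omega> s * Ztilde \<tau> \<mu> N \<omega> s)\<bar>) > \<epsilon>}"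
  obtain k :: nat where k: "exp T < 2 ^ k"
    using real_arch_pow[of 2 "exp T"] by auto
  define q where "q = exp T / 2 ^ k"
  have upper: "?p N \<le> q ^ N" if "nat \<lceil>\<mu> * exp (real k)\<rceil> \<le> N" for N
  proof -
    have "?p N \<le> exp (real N * T) / 2 ^ (k * N)"
      using that assms(2,3) \<open>\<epsilon> > 0\<close>
      by (intro measure_SUP_integral_Yp_Ztilde_gt_le) (simp_all add: nat_ceiling_le_eq)
    also have "\<dots> = q ^ N"
      by (simp add: q_def power_divide power_mult exp_of_nat_mult)
    finally show ?thesis .
  qed
  have "eventually (\<lambda>N. 0 \<le> ?p N) sequentially"
    by simp
  moreover have "eventually (\<lambda>N. ?p N \<le> q ^ N) sequentially"
    using upper by (rule eventually_sequentiallyI)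
  moreover have "(\<lambda>N. q ^ N) \<longlonglongrightarrow> 0"
    using k by (intro LIMSEQ_power_zero) (simp add: q_def)
  ultimately show "?p \<longlonglongrightarrow> 0"
    by (rule tendsto_sandwich[OF _ _ tendsto_const])
qed

end
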